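(* Let $\mathcal{F}$ be a vector space over a field $K$, let $T \colon \mathcal{F} \to \mathcal{F}$ be a surjective linear map, let $\mathcal{B} \leq \mathcal{F}^*$ be a finite-dimensional subspace and $\mathcal{E} \leq \mathcal{F}$ a subspace such that $\mathcal{B}^{\perp} \cap \operatorname{Ker} T = \{0\}$ and $\mathcal{F} = T(\mathcal{B}^{\perp}) \dotplus \mathcal{E}$. Let $\tilde{\mathcal{B}} \leq \mathcal{B}$ be a subspace such that the boundary problem $(T, \tilde{\mathcal{B}})$ is regular, i.e. for every $f \in \mathcal{F}$ there is exactly one $u \in \tilde{\mathcal{B}}^{\perp}$ with $Tu = f$; denote by $\tilde G \colon \mathcal{F} \to \mathcal{F}$ the map sending $f$ to this $u$. Let $Q$ be the projector onto $T(\mathcal{B}^{\perp})$ along $\mathcal{E}$, and let $G \colon \mathcal{F} \to \mathcal{F}$ be the generalized Green's operator of $(T,\mathcal{B},\mathcal{E})$, which maps each $f \in \mathcal{F}$ to the unique $u \in \mathcal{B}^{\perp}$ with $Tu = Qf$. Then $G = \tilde G\, Q$.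
   Context: $\mathcal{F}^*$ denotes the algebraic dual of $\mathcal{F}$; for $\mathcal{B} \leq \mathcal{F}^*$, $\mathcal{B}^{\perp} = \{v \in \mathcal{F} : \beta(v) = 0 \text{ for all } \beta \in \mathcal{B}\}$. The projector onto $T(\mathcal{B}^{\perp})$ along $\mathcal{E}$ is the linear idempotent map with image $T(\mathcal{B}^{\perp})$ and kernel $\mathcal{E}$. *)

theory Defs
  imports Complex_Main
begin

definition lin_functional :: "('k::field \<Rightarrow> 'v::ab_group_add \<Rightarrow> 'v) \<Rightarrow> ('v \<Rightarrow> 'k) \<Rightarrow> bool" where
  "lin_functional scale \<beta> \<longleftrightarrow> Vector_Spaces.linear scale (*) \<beta>"

definition dual_subspace :: "('k::field \<Rightarrow> 'v::ab_group_add \<Rightarrow> 'v) \<Rightarrow> ('v \<Rightarrow> 'k) set \<Rightarrow> bool" where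
  "dual_subspace scale B \<longleftrightarrow>
     (\<forall>\<beta>\<in>B. lin_functional scale \<beta>) \<and> (\<lambda>_. 0) \<in> B \<and>
     (\<forall>\<beta>\<in>B. \<forall>\<gamma>\<in>B. (\<lambda>v. \<beta> v + \<gamma> v) \<in> B) \<and>
     (\<forall>c. \<forall>\<beta>\<in>B. (\<lambda>v. c * \<beta> v) \<in> B)"

definition fin_dim_dual :: "('v \<Rightarrow> 'k::field) set \<Rightarrow> bool" where
  "fin_dim_dual B \<longleftrightarrow>
     (\<exists>S. finite S \<and> S \<subseteq> B \<and> (\<forall>\<beta>\<in>B. \<exists>c. \<forall>v. \<beta> v = (\<Sum>\<sigma>\<in>S. c \<sigma> * \<sigma> v)))"

definition orth :: "('v \<Rightarrow> 'k::zero) set \<Rightarrow> 'v set" where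
  "orth B = {v. \<forall>\<beta>\<in>B. \<beta> v = 0}"

end

theory Submission
  imports Defs
begin

text \<open>Since \<open>Bt \<subseteq> B\<close>, the vector \<open>G f\<close> lies in \<open>orth Bt\<close> and solves \<open>T u = Q f\<close>; regularity
  of \<open>(T, Bt)\<close> makes this solution unique, and \<open>Gt (Q f)\<close> is another one.\<close>

lemma orth_antimono: "A \<subseteq> B \<Longrightarrow> orth B \<subseteq> orth A"
  unfolding orth_def by blast

theorem proposition2:
  fixes scale :: "'k::field \<Rightarrow> 'v::ab_group_add \<Rightarrow> 'v"
    and T :: "'v \<Rightarrow> 'v"
    and B Bt :: "('v \<Rightarrow> 'k) set"
    and E :: "'v set"
    and Q G Gt :: "'v \<Rightarrow> 'v"
  assumes vs: "vector_space scale"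
    and T_lin: "Vector_Spaces.linear scale scale T"
    and T_surj: "surj T"
    and B_sub: "dual_subspace scale B"
    and B_fin: "fin_dim_dual B"
    and E_sub: "module.subspace scale E"
    and inj: "orth B \<inter> {v. T v = 0} = {0}"
    and dsum1: "T ` orth B \<inter> E = {0}"
    and dsum2: "\<forall>f. \<exists>a\<in>T ` orth B. \<exists>e\<in>E. f = a + e"
    and Bt_sub: "dual_subspace scale Bt"
    and Bt_le: "Bt \<subseteq> B"
    and regular: "\<forall>f. \<exists>!u. u \<in> orth Bt \<and> T u = f"
    and Gt_def: "\<forall>f. Gt f \<in> orth Bt \<and> T (Gt f) = f"
    and Q_lin: "Vector_Spaces.linear scale scale Q"
    and Q_idem: "\<forall>f. Q (Q f) = Q f"
    and Q_range: "range Q = T ` orth B"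
    and Q_ker: "{f. Q f = 0} = E"
    and G_def: "\<forall>f. G f \<in> orth B \<and> T (G f) = Q f"
  shows "G = Gt \<circ> Q"
proof
  fix f
  have "G f \<in> orth Bt" "T (G f) = Q f"
    using G_def orth_antimono[OF Bt_le] by auto
  moreover have "Gt (Q f) \<in> orth Bt" "T (Gt (Q f)) = Q f"
    using Gt_def by auto
  ultimately show "G f = (Gt \<circ> Q) f"
    using regular[rule_format, of "Q f"] by auto
qed

end
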